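(* Assume the setting of the context and suppose that condition (A1)(d) holds. Then for any compact interval $I\subset(0,\infty)$, $x\in F$ and $r>0$, \[\lim_{n\rightarrow\infty}\mathbf{P}_{\rho}^{G^n}\left(X^n_{\lfloor \gamma(n)t\rfloor+i}\in B_E(x,r)\right)=\int_{B_F(x,r)}q_t(y)\nu(dy)\] uniformly for $t\in I$, $i\in\{0,1\}$.
   Context: Let $(E,d_E)$ be a metric space and $F\subseteq E$ such that $F\cap\overline{B}_E(x,r)$ is compact for all $x\in E$, $r>0$ ($\overline{B}_E$, $B_E$ closed and open balls in $E$). Let $d_F:=d_E|_{F\times F}$, $B_F(x,r)$ the open ball in $(F,d_F)$, $\rho\in F$, $\nu$ a Radon measure of full support on $(F,d_F)$ (extended to $E$ by $\nu(A):=\nu(A\cap F)$), and $(q_t(x))_{x\in F,t>0}$ jointly continuous in $(t,x)$ with $q_t\ge0$, $\int_Fq_t\,d\nu=1$. For a locally finite connected graph $G$ with symmetric edge weights $\mu^G_{xy}$ ($>0$ iff $\{x,y\}$ is an edge), the discrete time simple random walk $X^G$ has transition probabilities $P_G(x,y)=\mu^G_{xy}/\sum_z\mu^G_{xz}$ and law $\mathbf{P}^G_x$ from $x$. Let $(G^n)_{n\ge1}$ be locally finite connected graphs with at least two vertices, $V(G^n)\subseteq E$, distinguished vertex $\rho$; write $X^n:=X^{G^n}$. Let $(\gamma(n))$ be a non-negative sequence diverging to $\infty$. Condition (A1)(d): for every compact interval $I\subset(0,\infty)$, $x\in F$, $r>0$, $\lim_n\mathbf{P}^{G^n}_\rho(X^n_{\lfloor\gamma(n)t\rfloor}\in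 B_E(x,r))=\int_{B_F(x,r)}q_t(y)\nu(dy)$ uniformly for $t\in I$. *)

theory Defs
  imports "HOL-Probability.Probability"
begin

definition weighted_graph :: "'a set \<Rightarrow> ('a \<Rightarrow> 'a \<Rightarrow> real) \<Rightarrow> bool" where
  "weighted_graph V mu \<longleftrightarrow>
     (\<forall>x y. mu x y = mu y x) \<and> (\<forall>x y. 0 \<le> mu x y) \<and>
     (\<forall>x y. 0 < mu x y \<longrightarrow> x \<in> V \<and> y \<in> V) \<and>
     (\<forall>x\<in>V. finite {y. 0 < mu x y}) \<and>
     (\<forall>x\<in>V. \<forall>y\<in>V. (x, y) \<in> {(a, b). 0 < mu a b}\<^sup>*) \<and>
     (\<exists>x\<in>V. \<exists>y\<in>V. x \<noteq> y)"

definition rw_step :: "('a \<Rightarrow> 'a \<Rightarrow> real) \<Rightarrow> 'a \<Rightarrow> 'a pmf" where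
  "rw_step mu x = embed_pmf (\<lambda>y. mu x y / (\<Sum>z\<in>{z. 0 < mu x z}. mu x z))"

text \<open>Law of X_k under P_x (discrete time simple random walk started at x).\<close>
fun rw_dist :: "('a \<Rightarrow> 'a \<Rightarrow> real) \<Rightarrow> 'a \<Rightarrow> nat \<Rightarrow> 'a pmf" where
  "rw_dist mu x 0 = return_pmf x"
| "rw_dist mu x (Suc k) = bind_pmf (rw_dist mu x k) (rw_step mu)"

end

theory Submission
  imports Defs
begin

text \<open>One extra step of the walk is the same as advancing the time parameter by \<open>1/\<gamma>(n)\<close>:
  \<open>\<lfloor>\<gamma>(n) t\<rfloor> + 1 = \<lfloor>\<gamma>(n) (t + 1/\<gamma>(n))\<rfloor>\<close>. Since \<open>1/\<gamma>(n) \<rightarrow> 0\<close>, the shifted probabilities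
  still converge uniformly provided the limit \<open>t \<mapsto> \<integral>\<^bsub>B(x,r)\<^esub> q\<^sub>t d\<nu>\<close> is uniformly continuous on
  the slightly larger interval \<open>[a, b+1]\<close>; this follows from the uniform continuity of \<open>q\<close> on the
  compact set \<open>[a, b+1] \<times> (F \<inter> closed ball)\<close>, the ball having finite \<open>\<nu>\<close>-measure.\<close>

lemma nat_floor_mult_add_inverse:
  fixes c t :: real
  assumes "c > 0" "t \<ge> 0"
  shows "nat \<lfloor>c * (t + inverse c)\<rfloor> = nat \<lfloor>c * t\<rfloor> + 1"
proof -
  have "c * (t + inverse c) = c * t + 1"
    using assms(1) by (simp add: algebra_simps)
  then show ?thesis
    using assms by (simp add: nat_add_distrib)
qed

lemma uniform_limit_on_Times_singleton:
  assumes "uniform_limit S (\<lambda>n t. f n (t, i)) (\<lambda>t. g (t, i)) F"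
  shows "uniform_limit (S \<times> {i}) f g F"
proof -
  have "uniform_limit (S \<times> {i}) (\<lambda>n p. f n (fst p, i)) (\<lambda>p. g (fst p, i)) F"
    by (rule uniform_limit_compose'[OF assms]) auto
  then show ?thesis
    by (rule iffD1[OF uniform_limit_cong', rotated -1]) auto
qed

lemma uniform_limit_compose_uniform_limit_id:
  fixes f :: "'i \<Rightarrow> 'a::metric_space \<Rightarrow> 'b::metric_space"
  assumes lim: "uniform_limit T f g F"
    and cont: "uniformly_continuous_on T g"
    and s_lim: "uniform_limit S s (\<lambda>t. t) F"
    and s_into: "\<forall>\<^sub>F n in F. s n ` S \<subseteq> T"
    and "S \<subseteq> T"
  shows "uniform_limit S (\<lambda>n t. f n (s n t)) g F"
proof (rule uniform_limitI)
  fix e :: real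
  assume "e > 0"
  have g_s_lim: "uniform_limit S (\<lambda>n t. g (s n t)) (g \<circ> (\<lambda>t. t)) F"
    using \<open>S \<subseteq> T\<close> by (intro uniform_limit_compose[OF s_lim cont s_into]) auto
  have "e/2 > 0"
    using \<open>e > 0\<close> by simp
  show "\<forall>\<^sub>F n in F. \<forall>t\<in>S. dist (f n (s n t)) (g t) < e"
    using uniform_limitD[OF lim \<open>e/2 > 0\<close>] uniform_limitD[OF g_s_lim \<open>e/2 > 0\<close>] s_into
  proof eventually_elim
    case (elim n)
    show ?case
    proof
      fix t assume "t \<in> S"
      then have "dist (f n (s n t)) (g (s n t)) < e/2" "dist (g (s n t)) (g t) < e/2"
        using elim by auto
      then show "dist (f n (s n t)) (g t) < e"
        using dist_triangle[of "f n (s n t)" "g t" "g (s n t)"] by linarith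
    qed
  qed
qed

lemma uniform_limit_floor_time_Suc:
  fixes P :: "'i \<Rightarrow> nat \<Rightarrow> 'b::metric_space" and \<gamma> :: "'i \<Rightarrow> real"
  assumes lim: "uniform_limit {a..b+1} (\<lambda>n t. P n (nat \<lfloor>\<gamma> n * t\<rfloor>)) g F"
    and cont: "uniformly_continuous_on {a..b+1} g"
    and \<gamma>_lim: "filterlim \<gamma> at_top F" and "0 \<le> a"
  shows "uniform_limit {a..b} (\<lambda>n t. P n (nat \<lfloor>\<gamma> n * t\<rfloor> + 1)) g F"
proof -
  have "uniform_limit {a..b} (\<lambda>n t. t + inverse (\<gamma> n)) (\<lambda>t. t) F"
  proof (rule uniform_limitI)
    fix e :: real assume "e > 0"
    with tendsto_inverse_0_at_top[OF \<gamma>_lim] have "\<forall>\<^sub>F n in F. \<bar>inverse (\<gamma> n)\<bar> < e"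
      by (auto simp: tendsto_iff dist_real_def)
    then show "\<forall>\<^sub>F n in F. \<forall>t\<in>{a..b}. dist (t + inverse (\<gamma> n)) t < e"
      by eventually_elim (simp add: dist_real_def)
  qed
  moreover have "\<forall>\<^sub>F n in F. (\<lambda>t. t + inverse (\<gamma> n)) ` {a..b} \<subseteq> {a..b+1}"
    using \<gamma>_lim unfolding filterlim_at_top
    by (rule allE[of _ 1]) (auto elim!: eventually_mono simp: inverse_le_1_iff)
  ultimately have shifted:
      "uniform_limit {a..b} (\<lambda>n t. P n (nat \<lfloor>\<gamma> n * (t + inverse (\<gamma> n))\<rfloor>)) g F"
    by (intro uniform_limit_compose_uniform_limit_id[OF lim cont]) auto
  have "\<forall>\<^sub>F n in F. \<forall>t\<in>{a..b}.
      P n (nat \<lfloor>\<gamma> n * (t + inverse (\<gamma> n))\<rfloor>) = P n (nat \<lfloor>\<gamma> n * t\<rfloor> + 1)"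
    using \<gamma>_lim unfolding filterlim_at_top_dense
    by (rule allE[of _ 0]) (use \<open>0 \<le> a\<close> in \<open>auto elim!: eventually_mono simp: nat_floor_mult_add_inverse\<close>)
  from uniform_limit_cong[OF this refl] shifted show ?thesis
    by blast
qed

lemma set_integrable_continuous_on_compact:
  fixes f :: "'a::metric_space \<Rightarrow> real"
  assumes "sets M = sets borel" "compact K" "continuous_on K f"
    and "B \<subseteq> K" "B \<in> sets M" "emeasure M B < \<infinity>"
  shows "set_integrable M B f"
proof -
  obtain C where C: "\<And>y. y \<in> K \<Longrightarrow> \<bar>f y\<bar> \<le> C"
    using compact_imp_bounded[OF compact_continuous_image[OF assms(3,2)]]
    by (metis bounded_iff imageI real_norm_def)
  have "(\<lambda>y. indicator B y *\<^sub>R f y) \<in> borel_measurable borel"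
    using assms by (intro borel_measurable_continuous_on_indicator continuous_on_subset[OF assms(3,4)]) auto
  then have meas: "(\<lambda>y. indicator B y *\<^sub>R f y) \<in> borel_measurable M"
    by (simp add: measurable_cong_sets[OF assms(1) refl])
  show ?thesis
    unfolding set_integrable_def
  proof (rule integrableI_bounded_set[where A = B and B = C])
    show "AE y in M. y \<in> B \<longrightarrow> norm (indicator B y *\<^sub>R f y) \<le> C"
      using C \<open>B \<subseteq> K\<close> by (intro AE_I2) auto
  qed (use assms meas in auto)
qed

lemma set_integral_dist_le:
  fixes f g :: "'a \<Rightarrow> real"
  assumes f: "set_integrable M B f" and g: "set_integrable M B g"
    and "B \<in> sets M" "emeasure M B < \<infinity>"
    and close: "\<And>y. y \<in> B \<Longrightarrow> \<bar>f y - g y\<bar> \<le> e"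
  shows "\<bar>(LINT y:B|M. f y) - (LINT y:B|M. g y)\<bar> \<le> e * measure M B"
proof -
  have diff: "set_integrable M B (\<lambda>y. f y - g y)"
    using f g by simp
  have "\<bar>(LINT y:B|M. f y) - (LINT y:B|M. g y)\<bar> = \<bar>LINT y:B|M. f y - g y\<bar>"
    using f g by simp
  also have "\<dots> \<le> (LINT y:B|M. \<bar>f y - g y\<bar>)"
    using set_integral_norm_bound[OF diff] by simp
  also have "\<dots> \<le> (LINT y:B|M. e)"
  proof (rule set_integral_mono[OF set_integrable_abs[OF diff]])
    show "set_integrable M B (\<lambda>_. e)"
      unfolding set_integrable_def using assms(3,4) by (intro integrable_scaleR_left) auto
  qed (use close in auto)
  also have "\<dots> = e * measure M B"
    using assms by (simp add: set_integral_const)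
  finally show ?thesis .
qed

lemma uniformly_continuous_on_set_integral_param:
  fixes q :: "'t::metric_space \<Rightarrow> 'a::metric_space \<Rightarrow> real"
  assumes "sets M = sets borel" "compact T" "compact K"
    and q_cont: "continuous_on (T \<times> K) (\<lambda>(t, y). q t y)"
    and "B \<subseteq> K" "B \<in> sets M" "emeasure M B < \<infinity>"
  shows "uniformly_continuous_on T (\<lambda>t. LINT y:B|M. q t y)"
  unfolding uniformly_continuous_on_def
proof (intro allI impI)
  fix e :: real
  assume "e > 0"
  define m where "m = measure M B"
  have "m \<ge> 0"
    by (simp add: m_def)
  with \<open>e > 0\<close> have "e / (m + 1) > 0"
    by simp
  moreover have "uniformly_continuous_on (T \<times> K) (\<lambda>(t, y). q t y)"
    using assms by (intro compact_uniformly_continuous q_cont compact_Times)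
  ultimately obtain d where "d > 0" and d: "\<And>u v. u \<in> T \<times> K \<Longrightarrow> v \<in> T \<times> K \<Longrightarrow>
      dist v u < d \<Longrightarrow> dist ((\<lambda>(t, y). q t y) v) ((\<lambda>(t, y). q t y) u) < e / (m + 1)"
    unfolding uniformly_continuous_on_def by blast
  have integrable: "set_integrable M B (q t)" if "t \<in> T" for t
    using assms that
    by (intro set_integrable_continuous_on_compact[where K = K]
        continuous_on_compose2[OF q_cont, where f = "\<lambda>y. (t, y)", simplified])
        (auto intro: continuous_on_Pair continuous_on_const continuous_on_id)
  show "\<exists>d>0. \<forall>s\<in>T. \<forall>t\<in>T. dist t s < d \<longrightarrow>
      dist (LINT y:B|M. q t y) (LINT y:B|M. q s y) < e"
  proof (intro exI[of _ d] conjI ballI impI \<open>d > 0\<close>)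
    fix s t assume st: "s \<in> T" "t \<in> T" "dist t s < d"
    have "\<bar>q t y - q s y\<bar> \<le> e / (m + 1)" if "y \<in> B" for y
      using d[of "(s, y)" "(t, y)"] st that \<open>B \<subseteq> K\<close>
      by (force simp: dist_Pair_Pair dist_real_def)
    then have "\<bar>(LINT y:B|M. q t y) - (LINT y:B|M. q s y)\<bar> \<le> e / (m + 1) * m"
      unfolding m_def using assms st by (intro set_integral_dist_le integrable) auto
    also have "\<dots> < e"
      using \<open>e > 0\<close> \<open>m \<ge> 0\<close> by (simp add: field_simps)
    finally show "dist (LINT y:B|M. q t y) (LINT y:B|M. q s y) < e"
      by (simp add: dist_real_def)
  qed
qed

theorem lemma2p1:
  fixes F :: "'a::metric_space set"
    and nu :: "'a measure"
    and q :: "real \<Rightarrow> 'a \<Rightarrow> real"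
    and rho :: 'a
    and V :: "nat \<Rightarrow> 'a set"
    and mu :: "nat \<Rightarrow> 'a \<Rightarrow> 'a \<Rightarrow> real"
    and \<gamma> :: "nat \<Rightarrow> real"
  assumes F_cpt: "\<And>x r. r > 0 \<Longrightarrow> compact (F \<inter> cball x r)"
    and rho_F: "rho \<in> F"
    and nu_sets: "sets nu = sets borel"
    and nu_ext: "\<And>A. A \<in> sets nu \<Longrightarrow> emeasure nu A = emeasure nu (A \<inter> F)"
    and nu_locfin: "\<And>K. compact K \<Longrightarrow> K \<subseteq> F \<Longrightarrow> emeasure nu K < \<infinity>"
    and nu_inner: "\<And>A. A \<in> sets nu \<Longrightarrow>
          emeasure nu A = (SUP K \<in> {K. compact K \<and> K \<subseteq> A}. emeasure nu K)"
    and nu_supp: "\<And>x r. x \<in> F \<Longrightarrow> r > 0 \<Longrightarrow> emeasure nu (ball x r \<inter> F) > 0"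
    and q_cont: "continuous_on ({0<..} \<times> F) (\<lambda>(t, x). q t x)"
    and q_nonneg: "\<And>t x. t > 0 \<Longrightarrow> x \<in> F \<Longrightarrow> 0 \<le> q t x"
    and q_int: "\<And>t. t > 0 \<Longrightarrow> (LINT y:F|nu. q t y) = 1"
    and graphs: "\<And>n. n \<ge> 1 \<Longrightarrow> weighted_graph (V n) (mu n)"
    and rho_V: "\<And>n. n \<ge> 1 \<Longrightarrow> rho \<in> V n"
    and gamma_nonneg: "\<And>n. 0 \<le> \<gamma> n"
    and gamma_lim: "filterlim \<gamma> at_top sequentially"
    and A1d: "\<And>a b x r. 0 < a \<Longrightarrow> a \<le> b \<Longrightarrow> x \<in> F \<Longrightarrow> r > 0 \<Longrightarrow>
          uniform_limit {a..b}
            (\<lambda>n t. measure_pmf.prob (rw_dist (mu n) rho (nat \<lfloor>\<gamma> n * t\<rfloor>)) (ball x r))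
            (\<lambda>t. LINT y:(ball x r \<inter> F)|nu. q t y) sequentially"
  shows "\<And>a b x r. 0 < a \<Longrightarrow> a \<le> b \<Longrightarrow> x \<in> F \<Longrightarrow> r > 0 \<Longrightarrow>
          uniform_limit ({a..b} \<times> {0, 1})
            (\<lambda>n (t, i). measure_pmf.prob (rw_dist (mu n) rho (nat \<lfloor>\<gamma> n * t\<rfloor> + i)) (ball x r))
            (\<lambda>(t, i). LINT y:(ball x r \<inter> F)|nu. q t y) sequentially"
proof -
  fix a b :: real and x :: 'a and r :: real
  assume ab: "0 < a" "a \<le> b" and "x \<in> F" "r > 0"
  define P where "P n k = measure_pmf.prob (rw_dist (mu n) rho k) (ball x r)" for n k
  define B where "B = ball x r \<inter> F"
  define g where "g t = (LINT y:B|nu. q t y)" for t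
  have lim: "uniform_limit {a..c} (\<lambda>n t. P n (nat \<lfloor>\<gamma> n * t\<rfloor>)) g sequentially" if "b \<le> c" for c
    using A1d[of a c x r] ab that \<open>x \<in> F\<close> \<open>r > 0\<close> unfolding P_def g_def B_def by simp
  have K: "compact (F \<inter> cball x r)"
    using F_cpt \<open>r > 0\<close> by simp
  have "B = ball x r \<inter> (F \<inter> cball x r)"
    by (auto simp: B_def)
  then have B_meas: "B \<in> sets nu"
    using K nu_sets by (simp add: borel_closed compact_imp_closed sets.Int)
  have "emeasure nu B \<le> emeasure nu (F \<inter> cball x r)"
    using K nu_sets by (intro emeasure_mono) (auto simp: B_def compact_imp_closed)
  with nu_locfin[OF K] have B_fin: "emeasure nu B < \<infinity>"
    by simp
  have "uniformly_continuous_on {a..b+1} g"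
    unfolding g_def using ab K B_meas B_fin nu_sets
    by (intro uniformly_continuous_on_set_integral_param[where K = "F \<inter> cball x r"]
        continuous_on_subset[OF q_cont]) (auto simp: B_def)
  with lim gamma_lim ab have "uniform_limit {a..b} (\<lambda>n t. P n (nat \<lfloor>\<gamma> n * t\<rfloor> + 1)) g sequentially"
    by (intro uniform_limit_floor_time_Suc) auto
  moreover have "uniform_limit {a..b} (\<lambda>n t. P n (nat \<lfloor>\<gamma> n * t\<rfloor> + 0)) g sequentially"
    using lim by simp
  ultimately have "uniform_limit ({a..b} \<times> {0} \<union> {a..b} \<times> {1})
      (\<lambda>n (t, i). P n (nat \<lfloor>\<gamma> n * t\<rfloor> + i)) (\<lambda>(t, i). g t) sequentially"
    by (intro uniform_limit_on_Un uniform_limit_on_Times_singleton) auto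
  moreover have "{a..b} \<times> {0, 1} = {a..b} \<times> {0} \<union> {a..b} \<times> {1::nat}"
    by auto
  ultimately show "uniform_limit ({a..b} \<times> {0, 1})
      (\<lambda>n (t, i). measure_pmf.prob (rw_dist (mu n) rho (nat \<lfloor>\<gamma> n * t\<rfloor> + i)) (ball x r))
      (\<lambda>(t, i). LINT y:(ball x r \<inter> F)|nu. q t y) sequentially"
    unfolding P_def g_def B_def by (simp only:)
qed

end
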